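(* Let $G$ be a graph that has a proper VPG-representation $R_V$ in a $w\times h$-grid in which every vertex-path is $xy^+$-monotone. Then every subgraph $G'$ of $G$ has an $xy^+$-monotone EPG-representation in a $(2w+h)\times 2h$-grid.
   Context: The $w\times h$-grid consists of all grid-points $(i,j)$ with integer coordinates $1\le i\le w$, $1\le j\le h$, and all grid-edges joining grid-points at distance $1$. A vertex-path is a path in the grid. An EPG-representation of a graph $G$ assigns to each vertex $v$ a vertex-path $\mathrm{path}(v)$ such that $(v,w)$ is an edge of $G$ if and only if $\mathrm{path}(v)$ and $\mathrm{path}(w)$ share a grid-edge. A VPG-representation of $G$ assigns to each vertex a vertex-path such that $(v,w)$ is an edge if and only if $\mathrm{path}(v)$ and $\mathrm{path}(w)$ share a grid-point. A VPG-representation is proper if (a) every grid-edge is used by at most one vertex-path, and (b) whenever a grid-point $p$ belongs to both $\mathrm{path}(v)$ and $\mathrm{path}(w)$ ($v\neq w$), one of these two vertex-paths contains the grid-edge going rightward from $p$ and the other contains the grid-edge going upward from $p$. A vertex-path is $x$-monotone if every vertical line meeting it meets it in a single interval; it is $xy$-monotone if additionally every horizontal line meeting it meets it in a single interval; it is $xy^+$-monotone if it is $xy$-monotone and its left endpoint is not above its right endpoint (i.e., it is monotonically increasing). An ($xy^+$-monotone) EPG-representation is one in which all vertex-paths are ($xy^+$-monotone). *)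

theory Defs
  imports "HOL-Analysis.Analysis"
begin

type_synonym gpoint = "int \<times> int"
type_synonym vpath = "gpoint list"

definition grid_point :: "nat \<Rightarrow> nat \<Rightarrow> gpoint \<Rightarrow> bool" where
  "grid_point w h p \<longleftrightarrow> 1 \<le> fst p \<and> fst p \<le> int w \<and> 1 \<le> snd p \<and> snd p \<le> int h"

definition adjacent :: "gpoint \<Rightarrow> gpoint \<Rightarrow> bool" where
  "adjacent p q \<longleftrightarrow> \<bar>fst p - fst q\<bar> + \<bar>snd p - snd q\<bar> = 1"

definition grid_path :: "nat \<Rightarrow> nat \<Rightarrow> vpath \<Rightarrow> bool" where
  "grid_path w h P \<longleftrightarrow> P \<noteq> [] \<and> distinct P \<and> (\<forall>p \<in> set P. grid_point w h p) \<and>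
     (\<forall>i. Suc i < length P \<longrightarrow> adjacent (P ! i) (P ! Suc i))"

definition path_edges :: "vpath \<Rightarrow> gpoint set set" where
  "path_edges P = {{P ! i, P ! Suc i} | i. Suc i < length P}"

definition rpt :: "gpoint \<Rightarrow> real \<times> real" where
  "rpt p = (real_of_int (fst p), real_of_int (snd p))"

definition path_trace :: "vpath \<Rightarrow> (real \<times> real) set" where
  "path_trace P = rpt ` set P \<union>
     (\<Union>i \<in> {i. Suc i < length P}. closed_segment (rpt (P ! i)) (rpt (P ! Suc i)))"

definition x_monotone :: "vpath \<Rightarrow> bool" where
  "x_monotone P \<longleftrightarrow> (\<forall>c::real. is_interval {y::real. (c, y) \<in> path_trace P})"

definition xy_monotone :: "vpath \<Rightarrow> bool" where
  "xy_monotone P \<longleftrightarrow> x_monotone P \<and> (\<forall>c::real. is_interval {x::real. (x, c) \<in> path_trace P})"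

definition xyp_monotone :: "vpath \<Rightarrow> bool" where
  "xyp_monotone P \<longleftrightarrow> xy_monotone P \<and>
     (\<forall>a \<in> {hd P, last P}. \<forall>b \<in> {hd P, last P}. fst a < fst b \<longrightarrow> snd a \<le> snd b)"

definition simple_graph :: "'v set \<Rightarrow> ('v \<times> 'v) set \<Rightarrow> bool" where
  "simple_graph V E \<longleftrightarrow> finite V \<and> E \<subseteq> V \<times> V \<and> sym E \<and> (\<forall>v. (v, v) \<notin> E)"

definition subgraph :: "'v set \<Rightarrow> ('v \<times> 'v) set \<Rightarrow> 'v set \<Rightarrow> ('v \<times> 'v) set \<Rightarrow> bool" where
  "subgraph V' E' V E \<longleftrightarrow> simple_graph V' E' \<and> V' \<subseteq> V \<and> E' \<subseteq> E"

definition EPG_rep :: "nat \<Rightarrow> nat \<Rightarrow> 'v set \<Rightarrow> ('v \<times> 'v) set \<Rightarrow> ('v \<Rightarrow> vpath) \<Rightarrow> bool" where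
  "EPG_rep w h V E R \<longleftrightarrow> (\<forall>v \<in> V. grid_path w h (R v)) \<and>
     (\<forall>u \<in> V. \<forall>v \<in> V. u \<noteq> v \<longrightarrow> ((u, v) \<in> E \<longleftrightarrow> path_edges (R u) \<inter> path_edges (R v) \<noteq> {}))"

definition VPG_rep :: "nat \<Rightarrow> nat \<Rightarrow> 'v set \<Rightarrow> ('v \<times> 'v) set \<Rightarrow> ('v \<Rightarrow> vpath) \<Rightarrow> bool" where
  "VPG_rep w h V E R \<longleftrightarrow> (\<forall>v \<in> V. grid_path w h (R v)) \<and>
     (\<forall>u \<in> V. \<forall>v \<in> V. u \<noteq> v \<longrightarrow> ((u, v) \<in> E \<longleftrightarrow> set (R u) \<inter> set (R v) \<noteq> {}))"

definition right_edge :: "gpoint \<Rightarrow> gpoint set" where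
  "right_edge p = {p, (fst p + 1, snd p)}"

definition up_edge :: "gpoint \<Rightarrow> gpoint set" where
  "up_edge p = {p, (fst p, snd p + 1)}"

definition proper_VPG_rep :: "nat \<Rightarrow> nat \<Rightarrow> 'v set \<Rightarrow> ('v \<times> 'v) set \<Rightarrow> ('v \<Rightarrow> vpath) \<Rightarrow> bool" where
  "proper_VPG_rep w h V E R \<longleftrightarrow> VPG_rep w h V E R \<and>
     (\<forall>u \<in> V. \<forall>v \<in> V. u \<noteq> v \<longrightarrow> path_edges (R u) \<inter> path_edges (R v) = {}) \<and>
     (\<forall>u \<in> V. \<forall>v \<in> V. u \<noteq> v \<longrightarrow> (\<forall>p \<in> set (R u) \<inter> set (R v).
        (right_edge p \<in> path_edges (R u) \<and> up_edge p \<in> path_edges (R v)) \<or>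
        (right_edge p \<in> path_edges (R v) \<and> up_edge p \<in> path_edges (R u))))"

end

theory Submission
  imports Defs
begin

text \<open>
  An xy+-monotone vertex-path is, up to reversal, a staircase: a path all of whose steps go
  right or up. Horizontal and vertical slices of a staircase are intervals; conversely, an
  x-monotone unit-step path never crosses the same column gap twice (both crossings would lie
  on the vertical line through the middle of the gap, at different integer heights), so its
  x-coordinates are monotone, and likewise for y; the condition on the endpoints excludes paths
  that go right and down.

  The shear (a, b) \<mapsto> (2a + b - 2, 2b - 1) maps the w \<times> h grid into the
  (2w + h) \<times> 2h grid, sending a right step to two right edges and an up step to one
  right and two up edges, which can be taken right-first or up-first. In a proper
  VPG-representation two paths meet at a point p only when one leaves p to the right and the
  other upwards. Taking the upward route right-first exactly when p lies on the path of a
  neighbour in the subgraph makes neighbouring paths share an edge, while no other pair of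
  routes shares one.
\<close>

section \<open>Staircases\<close>

definition right_or_up :: "gpoint \<Rightarrow> gpoint \<Rightarrow> bool" where
  "right_or_up p q \<longleftrightarrow> q = (fst p + 1, snd p) \<or> q = (fst p, snd p + 1)"

abbreviation staircase :: "vpath \<Rightarrow> bool" where
  "staircase \<equiv> successively right_or_up"

lemma right_or_up_less: "right_or_up p q \<Longrightarrow> p < q"
  by (auto simp: right_or_up_def less_prod_def less_eq_prod_def)

lemma right_or_up_adjacent: "right_or_up p q \<Longrightarrow> adjacent p q"
  by (auto simp: right_or_up_def adjacent_def)

lemma adjacent_sym: "adjacent p q \<longleftrightarrow> adjacent q p"
  by (auto simp: adjacent_def abs_minus_commute)

lemma adjacent_cases:
  assumes "adjacent p q"
  obtains "q = (fst p + 1, snd p)" | "q = (fst p - 1, snd p)"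
    | "q = (fst p, snd p + 1)" | "q = (fst p, snd p - 1)"
proof -
  have "\<bar>fst p - fst q\<bar> + \<bar>snd p - snd q\<bar> = 1"
    using assms unfolding adjacent_def .
  then have "(fst q = fst p + 1 \<or> fst q = fst p - 1) \<and> snd q = snd p
      \<or> fst q = fst p \<and> (snd q = snd p + 1 \<or> snd q = snd p - 1)"
    by arith
  with that show ?thesis by (cases q) auto
qed

lemma adjacent_right_or_up_iff: "adjacent p q \<Longrightarrow> right_or_up p q \<longleftrightarrow> p \<le> q"
  by (erule adjacent_cases) (auto simp: right_or_up_def less_eq_prod_def)

lemma staircase_sorted: "staircase P \<Longrightarrow> sorted_wrt (<) P"
  by (metis right_or_up_less successively_conv_sorted_wrt successively_mono transp_on_less)

lemma staircase_distinct: "staircase P \<Longrightarrow> distinct P"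
proof -
  assume "staircase P"
  then have "sorted_wrt (<) P" by (rule staircase_sorted)
  then show "distinct P" by (induction P) auto
qed

lemma staircase_iff_sorted:
  assumes "successively adjacent P"
  shows "staircase P \<longleftrightarrow> sorted (map fst P) \<and> sorted (map snd P)"
  using assms
  by (auto simp: successively_conv_nth sorted_iff_nth_Suc adjacent_right_or_up_iff less_eq_prod_def)

lemma staircase_hd_le_last: "staircase P \<Longrightarrow> P \<noteq> [] \<Longrightarrow> hd P \<le> last P"
  by (metis staircase_sorted hd_Cons_tl last_ConsL last_in_set last_tl order.order_iff_strict
      sorted_wrt.simps(2))

lemma successively_append_Cons:
  "successively R (xs @ y # ys) \<longleftrightarrow> successively R (xs @ [y]) \<and> successively R (y # ys)"
  by (induction xs rule: induct_list012) auto


lemma path_edges_Nil [simp]: "path_edges [] = {}"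
  and path_edges_singleton [simp]: "path_edges [p] = {}"
  by (auto simp: path_edges_def)

lemma path_edges_Cons_Cons [simp]: "path_edges (p # q # P) = insert {p, q} (path_edges (q # P))"
  unfolding path_edges_def
proof (intro set_eqI iffI)
  fix e assume "e \<in> {{(p # q # P) ! i, (p # q # P) ! Suc i} |i. Suc i < length (p # q # P)}"
  then obtain i where "e = {(p # q # P) ! i, (p # q # P) ! Suc i}" "Suc i < length (p # q # P)"
    by blast
  then show "e \<in> insert {p, q} {{(q # P) ! i, (q # P) ! Suc i} |i. Suc i < length (q # P)}"
    by (cases i) auto
next
  fix e assume "e \<in> insert {p, q} {{(q # P) ! i, (q # P) ! Suc i} |i. Suc i < length (q # P)}"
  then show "e \<in> {{(p # q # P) ! i, (p # q # P) ! Suc i} |i. Suc i < length (p # q # P)}"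
    by (auto intro: exI[of _ 0] exI[of _ "Suc i" for i])
qed

lemma path_edges_append_Cons: "path_edges (xs @ y # ys) = path_edges (xs @ [y]) \<union> path_edges (y # ys)"
  by (induction xs rule: induct_list012) auto

lemma path_edges_rev [simp]: "path_edges (rev P) = path_edges P"
proof (induction P rule: induct_list012)
  case (3 p q P)
  have "path_edges (rev (p # q # P)) = path_edges (rev P @ [q]) \<union> path_edges [q, p]"
    using path_edges_append_Cons[of "rev P" q "[p]"] by simp
  also have "path_edges (rev P @ [q]) = path_edges (q # P)"
    using "3.IH"(2) by simp
  finally show ?case by (auto simp: insert_commute)
qed auto

lemma mem_path_edges_set: "e \<in> path_edges P \<Longrightarrow> x \<in> e \<Longrightarrow> x \<in> set P"
  unfolding path_edges_def by auto

definition steps :: "vpath \<Rightarrow> (gpoint \<times> gpoint) set" where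
  "steps P = set (zip P (tl P))"

lemma steps_simps [simp]:
  "steps [] = {}" "steps [p] = {}" "steps (p # q # P) = insert (p, q) (steps (q # P))"
  by (simp_all add: steps_def)

lemma path_edges_steps: "path_edges P = (\<lambda>(p, q). {p, q}) ` steps P"
  by (induction P rule: induct_list012) auto

lemma staircase_steps: "staircase P \<Longrightarrow> (p, q) \<in> steps P \<Longrightarrow> right_or_up p q"
  by (induction P rule: induct_list012) auto

lemma staircase_edge_step:
  assumes "staircase P" "right_or_up p q" "{p, q} \<in> path_edges P"
  shows "(p, q) \<in> steps P"
proof -
  obtain a b where ab: "(a, b) \<in> steps P" "{p, q} = {a, b}"
    using assms(3) unfolding path_edges_steps by auto
  have "a < b" "p < q"
    using right_or_up_less staircase_steps assms(1,2) ab(1) by blast+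
  with ab(2) have "a = p \<and> b = q"
    by (auto simp: doubleton_eq_iff)
  with ab(1) show ?thesis by simp
qed

section \<open>Traces of staircases\<close>

lemma path_trace_singleton [simp]: "path_trace [p] = {rpt p}"
  unfolding path_trace_def by auto

lemma path_trace_Cons_Cons:
  "path_trace (p # q # P) = closed_segment (rpt p) (rpt q) \<union> path_trace (q # P)"
proof -
  have "{i. Suc i < length (p # q # P)} = insert 0 (Suc ` {i. Suc i < length (q # P)})"
    by (auto simp: image_iff) (metis Suc_less_eq less_Suc_eq_0_disj)
  then show ?thesis
    unfolding path_trace_def by auto
qed

lemma rpt_mem_path_trace: "rpt p \<in> path_trace (p # P)"
  unfolding path_trace_def by auto

lemma rpt_mono: "p \<le> q \<Longrightarrow> rpt p \<le> rpt q"
  by (simp add: rpt_def less_eq_prod_def)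

lemma closed_segment_right_or_up:
  assumes "right_or_up p q"
  shows "closed_segment (rpt p) (rpt q) = {rpt p..rpt q}"
  using assms unfolding right_or_up_def
proof
  assume "q = (fst p + 1, snd p)"
  then show ?thesis
    by (simp add: rpt_def closed_segment_same_snd closed_segment_eq_real_ivl1 atLeastAtMost_prod_eq)
next
  assume "q = (fst p, snd p + 1)"
  then show ?thesis
    by (simp add: rpt_def closed_segment_same_fst closed_segment_eq_real_ivl1 atLeastAtMost_prod_eq)
qed

lemma staircase_path_trace_ge: "staircase (p # P) \<Longrightarrow> z \<in> path_trace (p # P) \<Longrightarrow> rpt p \<le> z"
proof (induction P arbitrary: p)
  case (Cons q P)
  then have step: "right_or_up p q" and rest: "staircase (q # P)" by auto
  have pq: "rpt p \<le> rpt q"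
    using rpt_mono less_imp_le[OF right_or_up_less[OF step]] .
  from Cons.prems(2) consider "z \<in> {rpt p..rpt q}" | "z \<in> path_trace (q # P)"
    unfolding path_trace_Cons_Cons closed_segment_right_or_up[OF step] by blast
  then show ?case
  proof cases
    case 2
    then show ?thesis using Cons.IH[OF rest] pq by (blast intro: order_trans)
  qed simp
qed simp

text \<open>Each step of a staircase traces a box, and the rest of the staircase lies weakly above and
  to the right of the end of that box; so when a slice meets both, they overlap at that end.\<close>

lemma staircase_slices_interval:
  assumes "staircase P"
  shows "is_interval {y. (c, y) \<in> path_trace P} \<and> is_interval {x. (x, c) \<in> path_trace P}"
  using assms
proof (induction P rule: induct_list012)
  case (2 p)
  show ?case
    by (simp add: is_interval_1 prod_eq_iff)
next
  case (3 p q P)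
  have step: "right_or_up p q" and rest: "staircase (q # P)"
    using "3.prems" by auto
  define T where "T = path_trace (q # P)"
  have box: "path_trace (p # q # P) = {rpt p..rpt q} \<union> T"
    unfolding T_def path_trace_Cons_Cons closed_segment_right_or_up[OF step] ..
  have ge: "z \<in> T \<Longrightarrow> rpt q \<le> z" for z
    using staircase_path_trace_ge[OF rest] unfolding T_def .
  have q_in: "rpt q \<in> T" and pq: "rpt p \<le> rpt q"
    using rpt_mem_path_trace rpt_mono less_imp_le[OF right_or_up_less[OF step]] unfolding T_def
    by blast+
  have "is_interval ({y. (c, y) \<in> {rpt p..rpt q}} \<union> {y. (c, y) \<in> T})"
  proof (rule is_real_interval_union)
    show "is_interval {y. (c, y) \<in> {rpt p..rpt q}}"
      by (auto simp: is_interval_1 less_eq_prod_def)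
    show "is_interval {y. (c, y) \<in> T}"
      using "3.IH"(2) rest unfolding T_def by blast
    show "{y. (c, y) \<in> {rpt p..rpt q}} \<inter> {y. (c, y) \<in> T} \<noteq> {}"
      if "{y. (c, y) \<in> {rpt p..rpt q}} \<noteq> {}" "{y. (c, y) \<in> T} \<noteq> {}"
    proof -
      from that obtain y y' where "(c, y) \<in> {rpt p..rpt q}" and T: "(c, y') \<in> T" by blast
      then have "c = fst (rpt q)"
        using ge[OF T] by (auto simp: less_eq_prod_def)
      then have "snd (rpt q) \<in> {y. (c, y) \<in> {rpt p..rpt q}} \<inter> {y. (c, y) \<in> T}"
        using q_in pq by simp
      then show ?thesis by blast
    qed
  qed
  moreover have "is_interval ({x. (x, c) \<in> {rpt p..rpt q}} \<union> {x. (x, c) \<in> T})"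
  proof (rule is_real_interval_union)
    show "is_interval {x. (x, c) \<in> {rpt p..rpt q}}"
      by (auto simp: is_interval_1 less_eq_prod_def)
    show "is_interval {x. (x, c) \<in> T}"
      using "3.IH"(2) rest unfolding T_def by blast
    show "{x. (x, c) \<in> {rpt p..rpt q}} \<inter> {x. (x, c) \<in> T} \<noteq> {}"
      if "{x. (x, c) \<in> {rpt p..rpt q}} \<noteq> {}" "{x. (x, c) \<in> T} \<noteq> {}"
    proof -
      from that obtain x x' where "(x, c) \<in> {rpt p..rpt q}" and T: "(x', c) \<in> T" by blast
      then have "c = snd (rpt q)"
        using ge[OF T] by (auto simp: less_eq_prod_def)
      then have "fst (rpt q) \<in> {x. (x, c) \<in> {rpt p..rpt q}} \<inter> {x. (x, c) \<in> T}"
        using q_in pq by simp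
      then show ?thesis by blast
    qed
  qed
  ultimately show ?case
    unfolding box by (simp add: Collect_disj_eq)
qed (simp add: path_trace_def)

lemma staircase_xyp_monotone:
  assumes "staircase P" "P \<noteq> []"
  shows "xyp_monotone P"
  using staircase_slices_interval[OF assms(1)] staircase_hd_le_last[OF assms]
  unfolding xyp_monotone_def xy_monotone_def x_monotone_def
  by (auto simp: less_eq_prod_def)

section \<open>Monotone paths are staircases\<close>

lemma adjacent_same_fst_or_snd: "adjacent p q \<Longrightarrow> fst p = fst q \<or> snd p = snd q"
  by (erule adjacent_cases) auto

lemma closed_segment_subset_path_trace:
  "Suc i < length P \<Longrightarrow> closed_segment (rpt (P ! i)) (rpt (P ! Suc i)) \<subseteq> path_trace P"
  unfolding path_trace_def by auto

lemma path_trace_on_grid_lines: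
  assumes "successively adjacent P" "z \<in> path_trace P"
  shows "fst z \<in> \<int> \<or> snd z \<in> \<int>"
proof -
  from assms(2) consider "z \<in> rpt ` set P"
    | i where "Suc i < length P" "z \<in> closed_segment (rpt (P ! i)) (rpt (P ! Suc i))"
    unfolding path_trace_def by blast
  then show ?thesis
  proof cases
    case 1
    then show ?thesis by (auto simp: rpt_def)
  next
    case (2 i)
    then have "fst (P ! i) = fst (P ! Suc i) \<or> snd (P ! i) = snd (P ! Suc i)"
      using assms(1) adjacent_same_fst_or_snd by (auto simp: successively_conv_nth)
    with 2(2) show ?thesis
      by (auto simp: rpt_def closed_segment_same_fst closed_segment_same_snd)
  qed
qed

lemma of_int_add_half_not_Ints: "real_of_int k + 1 / 2 \<notin> \<int>"
proof
  assume "real_of_int k + 1 / 2 \<in> \<int>"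
  then obtain n where "real_of_int k + 1 / 2 = real_of_int n"
    by (auto elim: Ints_cases)
  then have "2 * k + 1 = 2 * n"
    by linarith
  then show False
    by presburger
qed

text \<open>Off the grid lines a unit-step path meets a vertical line only in isolated points, so an
  x-monotone one meets it at most once.\<close>

lemma x_monotone_off_grid_slice:
  assumes adj: "successively adjacent P" and mono: "x_monotone P" and m: "m \<notin> \<int>"
    and y: "(m, y) \<in> path_trace P" and y': "(m, y') \<in> path_trace P"
  shows "y = y'"
proof (rule ccontr)
  assume "y \<noteq> y'"
  have "y \<in> \<int>" "y' \<in> \<int>"
    using path_trace_on_grid_lines[OF adj] y y' m by force+
  then obtain k k' where k: "y = real_of_int k" "y' = real_of_int k'"
    by (auto elim!: Ints_cases)
  define t where "t = real_of_int (min k k') + 1 / 2"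
  have "min k k' + 1 \<le> max k k'"
    using \<open>y \<noteq> y'\<close> unfolding k by auto
  then have "min y y' \<le> t" "t \<le> max y y'"
    unfolding k t_def of_int_min of_int_max by linarith+
  moreover have "min y y' \<in> {s. (m, s) \<in> path_trace P}" "max y y' \<in> {s. (m, s) \<in> path_trace P}"
    using y y' by (simp_all add: min_def max_def)
  ultimately have "(m, t) \<in> path_trace P"
    using mono unfolding x_monotone_def is_interval_1 by blast
  moreover have "t \<notin> \<int>"
    unfolding t_def by (rule of_int_add_half_not_Ints)
  ultimately show False
    using path_trace_on_grid_lines[OF adj] m by fastforce
qed

text \<open>Two distinct steps of an x-monotone path cannot cross the same column gap, because both
  would meet the vertical line through the middle of that gap.\<close>

lemma x_monotone_no_recrossing:
  assumes dist: "distinct P" and adj: "successively adjacent P" and mono: "x_monotone P"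
    and ik: "i \<noteq> k" "Suc i < length P" "Suc k < length P"
    and horizontal: "fst (P ! Suc i) \<noteq> fst (P ! i)"
    and recross: "fst (P ! k) = fst (P ! Suc i)" "fst (P ! Suc k) = fst (P ! i)"
  shows False
proof -
  define a b c e where "a = P ! i" "b = P ! Suc i" "c = P ! k" "e = P ! Suc k"
  have "adjacent a b" "adjacent c e"
    using adj ik unfolding a_b_c_e_def successively_conv_nth by auto
  then have "snd b = snd a" "snd e = snd c" "\<bar>fst b - fst a\<bar> = 1"
    using horizontal recross unfolding a_b_c_e_def adjacent_def by auto
  define m where "m = (real_of_int (fst a) + real_of_int (fst b)) / 2"
  have "m = real_of_int (min (fst a) (fst b)) + 1 / 2"
    using \<open>\<bar>fst b - fst a\<bar> = 1\<close> unfolding m_def by (auto simp: abs_if min_def)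
  then have m_off: "m \<notin> \<int>"
    using of_int_add_half_not_Ints by presburger
  have "midpoint (rpt a) (rpt b) = (m, real_of_int (snd a))"
       "midpoint (rpt c) (rpt e) = (m, real_of_int (snd c))"
    using \<open>snd b = snd a\<close> \<open>snd e = snd c\<close> recross
    unfolding a_b_c_e_def m_def by (auto simp: midpoint_def rpt_def)
  then have "(m, real_of_int (snd a)) \<in> path_trace P" "(m, real_of_int (snd c)) \<in> path_trace P"
    using closed_segment_subset_path_trace[of i P] closed_segment_subset_path_trace[of k P] ik
      midpoint_in_closed_segment unfolding a_b_c_e_def by (metis subsetD)+
  then have "real_of_int (snd a) = real_of_int (snd c)"
    by (rule x_monotone_off_grid_slice[OF adj mono m_off])
  then have "snd a = snd c"
    by simp
  then have "P ! k = P ! Suc i" "P ! Suc k = P ! i"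
    using recross \<open>snd b = snd a\<close> \<open>snd e = snd c\<close> unfolding a_b_c_e_def by (simp_all add: prod_eq_iff)
  then show False
    using ik dist by (simp add: nth_eq_iff_index_eq)
qed

text \<open>Any non-flat step strictly between two opposite steps is opposite to one of them, so the
  interval can be shrunk until only flat steps separate them.\<close>

lemma int_walk_recrossing:
  fixes f :: "nat \<Rightarrow> int"
  assumes "\<And>j. i \<le> j \<Longrightarrow> j \<le> k \<Longrightarrow> \<bar>f (Suc j) - f j\<bar> \<le> 1"
    and "i < k" "f (Suc i) \<noteq> f i" "f (Suc k) - f k = f i - f (Suc i)"
  shows "\<exists>i' k'. i \<le> i' \<and> i' < k' \<and> k' \<le> k \<and>
           f (Suc i') \<noteq> f i' \<and> f k' = f (Suc i') \<and> f (Suc k') = f i'"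
  using assms
proof (induction "k - i" arbitrary: i k rule: less_induct)
  case less
  note unit = less.prems(1)
  show ?case
  proof (cases "\<exists>j. i < j \<and> j < k \<and> f (Suc j) \<noteq> f j")
    case False
    have plateau: "f j = f (Suc i)" if "Suc i \<le> j" "j \<le> k" for j
      using that
    proof (induction j rule: dec_induct)
      case (step j)
      then have "f (Suc j) = f j"
        using False by auto
      with step show ?case by simp
    qed simp
    have "f k = f (Suc i)"
      using plateau[of k] less.prems(2) by simp
    then show ?thesis
      using less.prems(2-4) by (intro exI[of _ i] exI[of _ k]) auto
  next
    case True
    then obtain j where j: "i < j" "j < k" "f (Suc j) \<noteq> f j"
      by blast
    have "\<bar>f (Suc i) - f i\<bar> \<le> 1" "\<bar>f (Suc j) - f j\<bar> \<le> 1"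
      using unit j by auto
    then consider "f (Suc j) - f j = f (Suc i) - f i" | "f (Suc j) - f j = f i - f (Suc i)"
      using j(3) less.prems(3) by linarith
    then show ?thesis
    proof cases
      case 1
      have "\<exists>i' k'. j \<le> i' \<and> i' < k' \<and> k' \<le> k \<and>
          f (Suc i') \<noteq> f i' \<and> f k' = f (Suc i') \<and> f (Suc k') = f i'"
      proof (rule less.hyps)
        show "k - j < k - i" "j < k" "f (Suc j) \<noteq> f j"
          using j by auto
        show "\<bar>f (Suc l) - f l\<bar> \<le> 1" if "j \<le> l" "l \<le> k" for l
          using unit that j by simp
        show "f (Suc k) - f k = f j - f (Suc j)"
          using 1 less.prems(4) by simp
      qed
      then show ?thesis
        using j(1) by (meson less_imp_le order_trans)
    next
      case 2
      have "\<exists>i' k'. i \<le> i' \<and> i' < k' \<and> k' \<le> j \<and>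
          f (Suc i') \<noteq> f i' \<and> f k' = f (Suc i') \<and> f (Suc k') = f i'"
      proof (rule less.hyps)
        show "j - i < k - i" "i < j" "f (Suc i) \<noteq> f i"
          using j less.prems(3) by auto
        show "\<bar>f (Suc l) - f l\<bar> \<le> 1" if "i \<le> l" "l \<le> j" for l
          using unit that j by simp
        show "f (Suc j) - f j = f i - f (Suc i)"
          using 2 by simp
      qed
      then show ?thesis
        using j(2) by (meson less_imp_le order_trans)
    qed
  qed
qed

lemma x_monotone_sorted_fst:
  assumes dist: "distinct P" and adj: "successively adjacent P" and mono: "x_monotone P"
  shows "sorted (map fst P) \<or> sorted (rev (map fst P))"
proof (rule ccontr)
  assume "\<not> ?thesis"
  then have "\<not> sorted (map fst P)" "\<not> sorted (rev (map fst P))"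
    by auto
  then obtain i k where i: "Suc i < length P" "fst (P ! Suc i) < fst (P ! i)"
    and k: "Suc k < length P" "fst (P ! k) < fst (P ! Suc k)"
    unfolding sorted_iff_nth_Suc[of "map fst P"] sorted_rev_iff_nth_Suc[of "map fst P"]
    by (auto simp: not_le)
  have unit: "\<bar>fst (P ! Suc j) - fst (P ! j)\<bar> \<le> 1" if "Suc j < length P" for j
    using adj that unfolding successively_conv_nth adjacent_def by force
  have opposite: "fst (P ! Suc k) - fst (P ! k) = fst (P ! i) - fst (P ! Suc i)"
    using unit[OF i(1)] unit[OF k(1)] i(2) k(2) by linarith
  have "i \<noteq> k"
    using i(2) k(2) by auto
  define a b where "a = min i k" "b = max i k"
  have ab: "a < b" "Suc b < length P" "fst (P ! Suc a) \<noteq> fst (P ! a)"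
      "fst (P ! Suc b) - fst (P ! b) = fst (P ! a) - fst (P ! Suc a)"
    using i k opposite \<open>i \<noteq> k\<close> unfolding a_b_def by (auto simp: min_def max_def)
  have "\<bar>fst (P ! Suc j) - fst (P ! j)\<bar> \<le> 1" if "a \<le> j" "j \<le> b" for j
    using unit that ab(2) by simp
  then obtain i' k' where "i' < k'" "k' \<le> b" "fst (P ! Suc i') \<noteq> fst (P ! i')"
      "fst (P ! k') = fst (P ! Suc i')" "fst (P ! Suc k') = fst (P ! i')"
    using int_walk_recrossing[of a b "\<lambda>j. fst (P ! j)", OF _ ab(1,3,4)] by blast
  then show False
    using x_monotone_no_recrossing[OF dist adj mono, of i' k'] ab(2) by simp
qed

lemma path_trace_map_swap: "path_trace (map prod.swap P) = prod.swap ` path_trace P"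
proof -
  have "linear (prod.swap :: real \<times> real \<Rightarrow> real \<times> real)"
    by (auto intro!: linearI)
  then have segment: "closed_segment (prod.swap a) (prod.swap b) = prod.swap ` closed_segment a b"
    for a b :: "real \<times> real"
    by (rule closed_segment_linear_image)
  have "rpt (prod.swap p) = prod.swap (rpt p)" for p
    by (simp add: rpt_def)
  then show ?thesis
    by (induction P rule: induct_list012)
      (simp_all add: path_trace_Cons_Cons segment image_Un, simp add: path_trace_def)
qed

lemma xy_monotone_sorted_snd:
  assumes "distinct P" "successively adjacent P" "xy_monotone P"
  shows "sorted (map snd P) \<or> sorted (rev (map snd P))"
proof -
  have "distinct (map prod.swap P)"
    using assms(1) by (simp add: distinct_map)
  moreover have "successively adjacent (map prod.swap P)"
    using assms(2) by (simp add: successively_map adjacent_def add.commute)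
  moreover have "{y. (c, y) \<in> prod.swap ` T} = {y. (y, c) \<in> T}" for c and T :: "(real \<times> real) set"
    by force
  then have "x_monotone (map prod.swap P)"
    using assms(3) unfolding xy_monotone_def x_monotone_def path_trace_map_swap by simp
  ultimately have "sorted (map fst (map prod.swap P)) \<or> sorted (rev (map fst (map prod.swap P)))"
    by (rule x_monotone_sorted_fst)
  then show ?thesis
    by (simp add: comp_def)
qed

lemma sorted_rev_if_last_le_hd:
  fixes xs :: "'a::linorder list"
  assumes "sorted xs" "last xs \<le> hd xs"
  shows "sorted (rev xs)"
proof (cases "xs = []")
  case False
  have "xs ! j = hd xs" if "j < length xs" for j
  proof (rule order.antisym)
    have "xs ! j \<le> xs ! (length xs - 1)"
      using sorted_nth_mono[OF assms(1), of j "length xs - 1"] that by linarith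
    then show "xs ! j \<le> hd xs"
      using assms(2) False by (simp add: last_conv_nth)
    show "hd xs \<le> xs ! j"
      using sorted_nth_mono[OF assms(1), of 0 j] that False by (simp add: hd_conv_nth)
  qed
  then show ?thesis
    unfolding sorted_rev_iff_nth_mono by simp
qed simp

lemma successively_adjacent_rev: "successively adjacent (rev P) \<longleftrightarrow> successively adjacent P"
proof -
  have "(\<lambda>p q. adjacent q p) = adjacent"
    using adjacent_sym by blast
  then show ?thesis
    using successively_rev[of adjacent P] by metis
qed

lemma staircase_or_rev_if_sorted_mixed:
  assumes adj: "successively adjacent P"
    and sorted_fst: "sorted (map fst P)" and sorted_snd: "sorted (rev (map snd P))"
    and ends: "fst (hd P) < fst (last P) \<Longrightarrow> snd (hd P) \<le> snd (last P)"
  shows "staircase P \<or> staircase (rev P)"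
proof (cases "P = []")
  case False
  show ?thesis
  proof (cases "fst (hd P) < fst (last P)")
    case True
    then have "last (rev (map snd P)) \<le> hd (rev (map snd P))"
      using ends False by (simp add: hd_map last_map hd_rev last_rev)
    then have "sorted (map snd P)"
      using sorted_rev_if_last_le_hd[OF sorted_snd] by simp
    then show ?thesis
      using staircase_iff_sorted[OF adj] sorted_fst by blast
  next
    case False
    then have "sorted (rev (map fst P))"
      using sorted_rev_if_last_le_hd[OF sorted_fst] \<open>P \<noteq> []\<close> by (simp add: hd_map last_map)
    moreover have "successively adjacent (rev P)"
      using adj by (simp only: successively_adjacent_rev)
    ultimately show ?thesis
      using staircase_iff_sorted sorted_snd by (metis rev_map)
  qed
qed simp

lemma xyp_monotone_staircase_or_rev:
  assumes "grid_path w h P" "xyp_monotone P"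
  shows "staircase P \<or> staircase (rev P)"
proof -
  have dist: "distinct P" and adj: "successively adjacent P" and "P \<noteq> []"
    using assms(1) unfolding grid_path_def successively_conv_nth by auto
  have xy: "xy_monotone P" and x: "x_monotone P"
    and ends: "\<And>a b. a \<in> {hd P, last P} \<Longrightarrow> b \<in> {hd P, last P} \<Longrightarrow>
      fst a < fst b \<Longrightarrow> snd a \<le> snd b"
    using assms(2) unfolding xyp_monotone_def xy_monotone_def by blast+
  have adj_rev: "successively adjacent (rev P)"
    using adj by (simp only: successively_adjacent_rev)
  from x_monotone_sorted_fst[OF dist adj x] xy_monotone_sorted_snd[OF dist adj xy]
  consider "sorted (map fst P)" "sorted (map snd P)"
    | "sorted (rev (map fst P))" "sorted (rev (map snd P))"
    | "sorted (map fst P)" "sorted (rev (map snd P))"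
    | "sorted (rev (map fst P))" "sorted (map snd P)"
    by blast
  then show ?thesis
  proof cases
    case 1
    then show ?thesis using staircase_iff_sorted[OF adj] by blast
  next
    case 2
    then show ?thesis using staircase_iff_sorted[OF adj_rev] by (metis rev_map)
  next
    case 3
    then show ?thesis using staircase_or_rev_if_sorted_mixed[OF adj] ends by blast
  next
    case 4
    moreover have "fst (hd (rev P)) < fst (last (rev P)) \<Longrightarrow> snd (hd (rev P)) \<le> snd (last (rev P))"
      using ends by (simp add: hd_rev last_rev)
    ultimately have "staircase (rev P) \<or> staircase (rev (rev P))"
      using staircase_or_rev_if_sorted_mixed[OF adj_rev] by (metis rev_map rev_rev_ident)
    then show ?thesis by auto
  qed
qed

section \<open>Sheared staircases\<close>

definition shear :: "gpoint \<Rightarrow> gpoint" where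
  "shear p = (2 * fst p + snd p - 2, 2 * snd p - 1)"

definition route :: "(gpoint \<Rightarrow> bool) \<Rightarrow> gpoint \<Rightarrow> gpoint \<Rightarrow> vpath" where
  "route s p q =
     (if snd q = snd p then [shear p, shear p + (1, 0), shear q]
      else if s p then [shear p, shear p + (1, 0), shear p + (1, 1), shear q]
      else [shear p, shear p + (0, 1), shear p + (1, 1), shear q])"

fun sheared_path :: "(gpoint \<Rightarrow> bool) \<Rightarrow> vpath \<Rightarrow> vpath" where
  "sheared_path s (p # q # P) = butlast (route s p q) @ sheared_path s (q # P)"
| "sheared_path s P = map shear P"

lemma route_right:
  "route s (a, b) (a + 1, b) = [(2*a+b-2, 2*b-1), (2*a+b-1, 2*b-1), (2*a+b, 2*b-1)]"
  by (simp add: route_def shear_def algebra_simps)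

lemma route_up:
  "route s (a, b) (a, b + 1) = (if s (a, b)
     then [(2*a+b-2, 2*b-1), (2*a+b-1, 2*b-1), (2*a+b-1, 2*b), (2*a+b-1, 2*b+1)]
     else [(2*a+b-2, 2*b-1), (2*a+b-2, 2*b), (2*a+b-1, 2*b), (2*a+b-1, 2*b+1)])"
  by (simp add: route_def shear_def algebra_simps)

lemma route_snoc: "butlast (route s p q) @ [shear q] = route s p q"
  by (simp add: route_def)

lemma staircase_route: "right_or_up p q \<Longrightarrow> staircase (route s p q)"
  by (cases p) (auto simp: right_or_up_def route_right route_up)

lemma sheared_path_Cons: "\<exists>T. sheared_path s (q # P) = shear q # T"
  by (cases P) (auto simp: route_def)

lemma sheared_path_Cons_Cons_split:
  obtains T where "sheared_path s (q # P) = shear q # T"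
    "sheared_path s (p # q # P) = butlast (route s p q) @ shear q # T"
  using sheared_path_Cons[of s q P] by auto

lemma staircase_sheared_path: "staircase P \<Longrightarrow> staircase (sheared_path s P)"
proof (induction s P rule: sheared_path.induct)
  case (1 s p q P)
  obtain T where T: "sheared_path s (q # P) = shear q # T"
      "sheared_path s (p # q # P) = butlast (route s p q) @ shear q # T"
    by (rule sheared_path_Cons_Cons_split)
  have "staircase (route s p q)"
    using "1.prems" by (simp add: staircase_route)
  then show ?case
    using "1" T by (simp add: successively_append_Cons route_snoc)
qed (auto simp: successively_map right_or_up_def shear_def)

lemma path_edges_sheared_path:
  "path_edges (sheared_path s P) = (\<Union>(p, q) \<in> steps P. path_edges (route s p q))"
proof (induction s P rule: sheared_path.induct)
  case (1 s p q P)
  obtain T where T: "sheared_path s (q # P) = shear q # T"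
      "sheared_path s (p # q # P) = butlast (route s p q) @ shear q # T"
    by (rule sheared_path_Cons_Cons_split)
  show ?case
    using "1" T by (simp add: path_edges_append_Cons route_snoc)
qed auto

lemma sheared_path_near:
  "z \<in> set (sheared_path s P) \<Longrightarrow> \<exists>p \<in> set P. shear p \<le> z \<and> z \<le> shear p + (1, 1)"
proof (induction s P rule: sheared_path.induct)
  case (1 s p q P)
  then consider "z \<in> set (butlast (route s p q))" | "z \<in> set (sheared_path s (q # P))"
    by auto
  then show ?case
  proof cases
    case 1
    then have "shear p \<le> z \<and> z \<le> shear p + (1, 1)"
      by (auto simp: route_def less_eq_prod_def split: if_splits)
    then show ?thesis by auto
  next
    case 2
    then show ?thesis using "1.IH" by auto
  qed
qed (auto simp: less_eq_prod_def)

lemma grid_path_sheared_path: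
  assumes "grid_path w h P" "staircase P"
  shows "grid_path (2 * w + h) (2 * h) (sheared_path s P)"
proof -
  have stair: "staircase (sheared_path s P)"
    using assms(2) by (rule staircase_sheared_path)
  obtain q Q where "P = q # Q"
    using assms(1) by (cases P) (auto simp: grid_path_def)
  then have "sheared_path s P \<noteq> []"
    using sheared_path_Cons[of s q Q] by auto
  moreover have "grid_point (2 * w + h) (2 * h) z" if z: "z \<in> set (sheared_path s P)" for z
  proof -
    obtain p where "p \<in> set P" "shear p \<le> z" "z \<le> shear p + (1, 1)"
      using sheared_path_near[OF z] by blast
    moreover have "grid_point w h p"
      using assms(1) \<open>p \<in> set P\<close> unfolding grid_path_def by blast
    ultimately show ?thesis
      by (auto simp: grid_point_def shear_def less_eq_prod_def)
  qed
  moreover have "adjacent (sheared_path s P ! i) (sheared_path s P ! Suc i)"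
    if "Suc i < length (sheared_path s P)" for i
    using stair that right_or_up_adjacent successively_nth by blast
  ultimately show ?thesis
    using staircase_distinct[OF stair] unfolding grid_path_def by blast
qed

lemma route_edges_meet:
  assumes "right_or_up p q" "right_or_up p' q'"
    and "e \<in> path_edges (route s p q)" "e \<in> path_edges (route s' p' q')"
  shows "p = p' \<and> (q = q' \<or> (q = (fst p + 1, snd p) \<and> q' = (fst p, snd p + 1) \<and> s' p)
     \<or> (q = (fst p, snd p + 1) \<and> q' = (fst p + 1, snd p) \<and> s p))"
proof -
  obtain a b a' b' where p: "p = (a, b)" and p': "p' = (a', b')"
    by (cases p, cases p')
  show ?thesis
    using assms unfolding right_or_up_def
    apply (elim disjE)
        apply (simp_all add: route_right route_up p p' split: if_splits)
      apply (auto simp: doubleton_eq_iff)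
    apply presburger+ \<comment> \<open>parity of the sheared coordinates\<close>
    done
qed

lemma first_edge_route_right: "{shear p, shear p + (1, 0)} \<in> path_edges (route s p (fst p + 1, snd p))"
  by (simp add: route_def)

lemma first_edge_route_up: "s p \<Longrightarrow> {shear p, shear p + (1, 0)} \<in> path_edges (route s p (fst p, snd p + 1))"
  by (simp add: route_def)

section \<open>The EPG-representation\<close>

lemma grid_path_rev [simp]: "grid_path w h (rev P) \<longleftrightarrow> grid_path w h P"
  unfolding grid_path_def successively_conv_nth[symmetric]
  by (simp add: successively_adjacent_rev del: successively_rev)

lemma proper_VPG_rep_reorient:
  assumes "proper_VPG_rep w h V E R" "\<And>v. v \<in> V \<Longrightarrow> Q v = R v \<or> Q v = rev (R v)"
  shows "proper_VPG_rep w h V E Q"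
proof -
  have "set (Q v) = set (R v)" "path_edges (Q v) = path_edges (R v)"
    "grid_path w h (Q v) = grid_path w h (R v)" if "v \<in> V" for v
    using assms(2)[OF that] by auto
  then show ?thesis
    using assms(1) unfolding proper_VPG_rep_def VPG_rep_def by simp
qed

definition neighbour_point :: "('v \<times> 'v) set \<Rightarrow> ('v \<Rightarrow> vpath) \<Rightarrow> 'v \<Rightarrow> gpoint \<Rightarrow> bool" where
  "neighbour_point E Q v p \<longleftrightarrow> (\<exists>u. (u, v) \<in> E \<and> p \<in> set (Q u))"

definition sheared_rep :: "('v \<times> 'v) set \<Rightarrow> ('v \<Rightarrow> vpath) \<Rightarrow> 'v \<Rightarrow> vpath" where
  "sheared_rep E Q v = sheared_path (neighbour_point E Q v) (Q v)"

context
  fixes w h :: nat and V V' :: "'v set" and E E' :: "('v \<times> 'v) set" and Q :: "'v \<Rightarrow> vpath"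
  assumes proper: "proper_VPG_rep w h V E Q"
    and stair: "\<And>v. v \<in> V \<Longrightarrow> staircase (Q v)"
    and sub: "subgraph V' E' V E"
begin

lemma subgraph_facts: "V' \<subseteq> V" "E' \<subseteq> E" "sym E'" "E' \<subseteq> V' \<times> V'" "(v, v) \<notin> E'"
  using sub unfolding subgraph_def simple_graph_def by auto

lemma proper_edges_disjoint:
  "u \<in> V \<Longrightarrow> v \<in> V \<Longrightarrow> u \<noteq> v \<Longrightarrow> path_edges (Q u) \<inter> path_edges (Q v) = {}"
  using proper unfolding proper_VPG_rep_def by blast

lemma proper_crossing:
  assumes "u \<in> V" "v \<in> V" "u \<noteq> v" "p \<in> set (Q u)" "p \<in> set (Q v)"
  shows "right_edge p \<in> path_edges (Q u) \<and> up_edge p \<in> path_edges (Q v) \<or>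
         right_edge p \<in> path_edges (Q v) \<and> up_edge p \<in> path_edges (Q u)"
  using proper assms unfolding proper_VPG_rep_def by blast

lemma right_edge_step:
  "v \<in> V \<Longrightarrow> right_edge p \<in> path_edges (Q v) \<Longrightarrow> (p, (fst p + 1, snd p)) \<in> steps (Q v)"
  using staircase_edge_step stair unfolding right_edge_def right_or_up_def by blast

lemma up_edge_step:
  "v \<in> V \<Longrightarrow> up_edge p \<in> path_edges (Q v) \<Longrightarrow> (p, (fst p, snd p + 1)) \<in> steps (Q v)"
  using staircase_edge_step stair unfolding up_edge_def right_or_up_def by blast

lemma sheared_rep_share_if_crossing_edge:
  assumes uv: "(u, v) \<in> E'" and right: "right_edge p \<in> path_edges (Q u)"
    and up: "up_edge p \<in> path_edges (Q v)"
  shows "path_edges (sheared_rep E' Q u) \<inter> path_edges (sheared_rep E' Q v) \<noteq> {}"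
proof -
  have "u \<in> V" "v \<in> V"
    using uv subgraph_facts by auto
  have "p \<in> set (Q u)"
    using right mem_path_edges_set unfolding right_edge_def by blast
  then have "neighbour_point E' Q v p"
    using uv unfolding neighbour_point_def by blast
  then have "{shear p, shear p + (1, 0)} \<in> path_edges (sheared_rep E' Q v)"
    using up_edge_step[OF \<open>v \<in> V\<close> up] first_edge_route_up[where s = "neighbour_point E' Q v"]
    unfolding sheared_rep_def path_edges_sheared_path by (auto intro!: bexI)
  moreover have "{shear p, shear p + (1, 0)} \<in> path_edges (sheared_rep E' Q u)"
    using right_edge_step[OF \<open>u \<in> V\<close> right] first_edge_route_right[where s = "neighbour_point E' Q u"]
    unfolding sheared_rep_def path_edges_sheared_path by (auto intro!: bexI)
  ultimately show ?thesis by blast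
qed

lemma sheared_rep_share_if_edge:
  assumes uv: "(u, v) \<in> E'"
  shows "path_edges (sheared_rep E' Q u) \<inter> path_edges (sheared_rep E' Q v) \<noteq> {}"
proof -
  have "u \<in> V" "v \<in> V" "u \<noteq> v" "(u, v) \<in> E" "(v, u) \<in> E'"
    using uv subgraph_facts by (auto dest: symD)
  then obtain p where "p \<in> set (Q u)" "p \<in> set (Q v)"
    using proper unfolding proper_VPG_rep_def VPG_rep_def by blast
  from proper_crossing[OF \<open>u \<in> V\<close> \<open>v \<in> V\<close> \<open>u \<noteq> v\<close> this] show ?thesis
    using sheared_rep_share_if_crossing_edge[OF uv] sheared_rep_share_if_crossing_edge[OF \<open>(v, u) \<in> E'\<close>]
    by blast
qed

text \<open>If the upward route of v at p turns right first, some neighbour u' of v passes through p;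
  by properness, u' can be neither v nor a third path through p, so u' is the path u that leaves
  p to the right.\<close>

lemma edge_if_neighbour_point:
  assumes "u \<in> V'" "v \<in> V'" "u \<noteq> v"
    and right: "right_edge p \<in> path_edges (Q u)" and up: "up_edge p \<in> path_edges (Q v)"
    and "neighbour_point E' Q v p"
  shows "(u, v) \<in> E'"
proof -
  obtain u' where u': "(u', v) \<in> E'" "p \<in> set (Q u')"
    using assms(6) unfolding neighbour_point_def by blast
  show ?thesis
  proof (rule ccontr)
    assume "(u, v) \<notin> E'"
    then have "u' \<noteq> u" "u' \<noteq> v" "u \<in> V" "u' \<in> V" "v \<in> V"
      using u' assms(1,2) subgraph_facts by auto
    moreover have "p \<in> set (Q u)"
      using right mem_path_edges_set unfolding right_edge_def by blast
    ultimately have "right_edge p \<in> path_edges (Q u) \<and> up_edge p \<in> path_edges (Q u') \<or>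
        right_edge p \<in> path_edges (Q u') \<and> up_edge p \<in> path_edges (Q u)"
      using proper_crossing u'(2) by blast
    then show False
    proof
      assume "right_edge p \<in> path_edges (Q u) \<and> up_edge p \<in> path_edges (Q u')"
      then show False
        using up proper_edges_disjoint[of u' v] \<open>u' \<noteq> v\<close> \<open>u' \<in> V\<close> \<open>v \<in> V\<close> by blast
    next
      assume "right_edge p \<in> path_edges (Q u') \<and> up_edge p \<in> path_edges (Q u)"
      then show False
        using right proper_edges_disjoint[of u u'] \<open>u' \<noteq> u\<close> \<open>u' \<in> V\<close> \<open>u \<in> V\<close> by blast
    qed
  qed
qed

lemma edge_if_sheared_rep_share:
  assumes uv: "u \<in> V'" "v \<in> V'" "u \<noteq> v"
    and share: "path_edges (sheared_rep E' Q u) \<inter> path_edges (sheared_rep E' Q v) \<noteq> {}"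
  shows "(u, v) \<in> E'"
proof -
  have "u \<in> V" "v \<in> V"
    using uv subgraph_facts by auto
  obtain e a b a' b' where e: "(a, b) \<in> steps (Q u)" "e \<in> path_edges (route (neighbour_point E' Q u) a b)"
      "(a', b') \<in> steps (Q v)" "e \<in> path_edges (route (neighbour_point E' Q v) a' b')"
    using share unfolding sheared_rep_def path_edges_sheared_path by blast
  have "right_or_up a b" "right_or_up a' b'"
    using staircase_steps stair \<open>u \<in> V\<close> \<open>v \<in> V\<close> e(1,3) by blast+
  from route_edges_meet[OF this e(2,4)] have "a' = a" and
    cases: "b' = b \<or> (b = (fst a + 1, snd a) \<and> b' = (fst a, snd a + 1) \<and> neighbour_point E' Q v a)
      \<or> (b = (fst a, snd a + 1) \<and> b' = (fst a + 1, snd a) \<and> neighbour_point E' Q u a)"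
    by auto
  have edges: "{a, b} \<in> path_edges (Q u)" "{a, b'} \<in> path_edges (Q v)"
    using e(1,3) \<open>a' = a\<close> unfolding path_edges_steps by force+
  from cases show ?thesis
  proof (elim disjE conjE)
    assume "b' = b"
    then show ?thesis
      using edges proper_edges_disjoint[OF \<open>u \<in> V\<close> \<open>v \<in> V\<close> uv(3)] by blast
  next
    assume "b = (fst a + 1, snd a)" "b' = (fst a, snd a + 1)" "neighbour_point E' Q v a"
    then show ?thesis
      using edge_if_neighbour_point[OF uv] edges unfolding right_edge_def up_edge_def by simp
  next
    assume "b = (fst a, snd a + 1)" "b' = (fst a + 1, snd a)" "neighbour_point E' Q u a"
    then have "(v, u) \<in> E'"
      using edge_if_neighbour_point[OF uv(2,1) uv(3)[symmetric]] edges
      unfolding right_edge_def up_edge_def by simp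
    then show ?thesis
      using subgraph_facts(3) by (auto dest: symD)
  qed
qed

lemma EPG_rep_sheared_rep: "EPG_rep (2 * w + h) (2 * h) V' E' (sheared_rep E' Q)"
  unfolding EPG_rep_def
proof (intro conjI ballI impI)
  fix v assume "v \<in> V'"
  then have "v \<in> V"
    using subgraph_facts(1) by blast
  then have "grid_path w h (Q v)"
    using proper unfolding proper_VPG_rep_def VPG_rep_def by simp
  then show "grid_path (2 * w + h) (2 * h) (sheared_rep E' Q v)"
    unfolding sheared_rep_def using stair[OF \<open>v \<in> V\<close>] by (rule grid_path_sheared_path)
next
  fix u v assume "u \<in> V'" "v \<in> V'" "u \<noteq> v"
  then show "(u, v) \<in> E' \<longleftrightarrow> path_edges (sheared_rep E' Q u) \<inter> path_edges (sheared_rep E' Q v) \<noteq> {}"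
    using sheared_rep_share_if_edge[of u v] edge_if_sheared_rep_share[of u v] by blast
qed

end

theorem lemma2:
  fixes V :: "'v set" and E :: "('v \<times> 'v) set" and R :: "'v \<Rightarrow> vpath"
    and w h :: nat
  assumes "simple_graph V E"
    and "proper_VPG_rep w h V E R"
    and "\<forall>v \<in> V. xyp_monotone (R v)"
  shows "\<forall>V' E'. subgraph V' E' V E \<longrightarrow>
           (\<exists>R'. EPG_rep (2 * w + h) (2 * h) V' E' R' \<and> (\<forall>v \<in> V'. xyp_monotone (R' v)))"
proof (intro allI impI)
  fix V' E' assume sub: "subgraph V' E' V E"
  define Q where "Q v = (if staircase (R v) then R v else rev (R v))" for v
  have grid: "grid_path w h (R v)" if "v \<in> V" for v
    using assms(2) that unfolding proper_VPG_rep_def VPG_rep_def by simp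
  have stair: "staircase (Q v)" if "v \<in> V" for v
    using xyp_monotone_staircase_or_rev[OF grid[OF that]] assms(3) that unfolding Q_def by auto
  have "proper_VPG_rep w h V E Q"
    by (rule proper_VPG_rep_reorient[OF assms(2)]) (simp add: Q_def)
  then have epg: "EPG_rep (2 * w + h) (2 * h) V' E' (sheared_rep E' Q)"
    using stair sub by (rule EPG_rep_sheared_rep)
  have "xyp_monotone (sheared_rep E' Q v)" if "v \<in> V'" for v
  proof (rule staircase_xyp_monotone)
    show "staircase (sheared_rep E' Q v)"
      using stair sub that unfolding sheared_rep_def subgraph_def by (auto intro: staircase_sheared_path)
    show "sheared_rep E' Q v \<noteq> []"
      using epg that unfolding EPG_rep_def grid_path_def by blast
  qed
  with epg show "\<exists>R'. EPG_rep (2 * w + h) (2 * h) V' E' R' \<and> (\<forall>v \<in> V'. xyp_monotone (R' v))"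
    by blast
qed

end
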